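(* For every $\mu\in\mathcal M_0(\mathbb Z)$ there exists $\mathbf r_\mu\in[0,1]^{\mathbb Z}$ such that the randomized Markovian stopping time $\tau(\mathbf r_\mu)$ solves the Skorokhod embedding problem in the filtration $\mathbb F^{S,\boldsymbol\xi}$: that is, $\tau(\mathbf r_\mu)<\infty$ a.s., $S_{\tau(\mathbf r_\mu)}\sim\mu$, and the stopped process $(S_{t\wedge\tau(\mathbf r_\mu)})_{t\ge0}$ is uniformly integrable.
   Context: Time is discrete, $t\in\{0,1,2,\dots\}$. $S=(S_t)_{t\ge0}$ is a simple symmetric random walk on $\mathbb Z$ with $S_0=0$. $\mathcal M_0(\mathbb Z)$ denotes the set of probability measures on $\mathbb Z$ with finite first moment and mean zero. A stopping time $\tau$ is called uniformly integrable (UI) if the stopped process $(S_{t\wedge\tau})_{t\ge0}$ is uniformly integrable. For a filtration $\mathbb F$ (with respect to which $S$ is adapted and $S_{t+1}-S_t$ is independent of $\mathcal F_t$), $\mathrm{SEP}(\mathbb F,\mu)$ denotes the set of $\mathbb F$-stopping times $\tau$ with $S_\tau\sim\mu$ and $\tau$ UI. Randomized Markovian stopping times: for $\mathbf r=(r_x)_{x\in\mathbb Z}\in[0,1]^{\mathbb Z}$, let $\boldsymbol\xi=\{\xi_{t,x}\}_{t\ge0,x\in\mathbb Z}$ be Bernoulli random variables, mutually independent and independent of $S$, with $\mathbb P(\xi_{t,x}=0)=r_x=1-\mathbb P(\xi_{t,x}=1)$, and set $\tau(\mathbf r):=\inf\{t\ge0:\xi_{t,S_t}=0\}$. This is a stopping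 time for the filtration $\mathbb F^{S,\boldsymbol\xi}=(\mathcal F^{S,\boldsymbol\xi}_t)_{t\ge 0}$, $\mathcal F^{S,\boldsymbol\xi}_t:=\sigma(S_u,\xi_{u,S_u}:u\le t)$. The law of $S_{\tau(\mathbf r)}$ depends only on $\mathbf r$. *)

theory Defs
  imports "HOL-Probability.Probability"
begin

text \<open>Canonical probability space carrying the simple symmetric random walk
  (through its i.i.d. uniform increments in {-1,1}) and the independent
  Bernoulli family xi(t,x) with P(xi(t,x) = 0) = r x. We encode xi(t,x)=1 as True
  and xi(t,x)=0 as False.\<close>

definition srw_xi_space :: "(int \<Rightarrow> real) \<Rightarrow> ((nat \<Rightarrow> int) \<times> (nat \<times> int \<Rightarrow> bool)) measure" where
  "srw_xi_space r =
     (PiM UNIV (\<lambda>_::nat. measure_pmf (pmf_of_set {-1, 1::int})))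
     \<Otimes>\<^sub>M (PiM UNIV (\<lambda>(t::nat, x::int). measure_pmf (bernoulli_pmf (1 - r x))))"

definition walk :: "(nat \<Rightarrow> int) \<times> (nat \<times> int \<Rightarrow> bool) \<Rightarrow> nat \<Rightarrow> int" where
  "walk \<omega> t = (\<Sum>u<t. fst \<omega> u)"

definition tau_r :: "(nat \<Rightarrow> int) \<times> (nat \<times> int \<Rightarrow> bool) \<Rightarrow> enat" where
  "tau_r \<omega> = (if \<exists>t. \<not> snd \<omega> (t, walk \<omega> t)
               then enat (LEAST t. \<not> snd \<omega> (t, walk \<omega> t)) else \<infinity>)"

definition stopped_walk :: "(nat \<Rightarrow> int) \<times> (nat \<times> int \<Rightarrow> bool) \<Rightarrow> nat \<Rightarrow> int" where
  "stopped_walk \<omega> t = walk \<omega> (the_enat (min (enat t) (tau_r \<omega>)))"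

definition unif_integrable :: "'a measure \<Rightarrow> (nat \<Rightarrow> 'a \<Rightarrow> real) \<Rightarrow> bool" where
  "unif_integrable M X \<longleftrightarrow>
     (\<forall>e>0. \<exists>K. \<forall>t. (\<integral>\<^sup>+ \<omega>. ennreal (\<bar>X t \<omega>\<bar>) * indicator {\<omega>. \<bar>X t \<omega>\<bar> > K} \<omega> \<partial>M) < ennreal e)"

definition mean_zero_int :: "int pmf \<Rightarrow> bool" where
  "mean_zero_int \<mu> \<longleftrightarrow> integrable (measure_pmf \<mu>) real_of_int
      \<and> measure_pmf.expectation \<mu> real_of_int = 0"

end

theory Submission
  imports Defs
begin

text \<open>Let \<open>U(x) = E\<^sub>\<mu> \<bar>Y - x\<bar>\<close> be the potential of \<open>\<mu>\<close> and \<open>h(x) = U(x) - \<bar>x\<bar> \<ge> 0\<close> its gap to the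
  potential of \<open>\<delta>\<^sub>0\<close>; since \<open>\<mu>\<close> has mean zero, \<open>h\<close> vanishes at \<open>\<plusminus>\<infinity>\<close>. The second difference of \<open>U\<close> is
  \<open>2\<mu>\<close>, so with \<open>G = h + \<mu>\<close> and \<open>r = \<mu> / G\<close> the function \<open>G\<close> solves
  \<open>G(x) = \<delta>\<^sub>0(x) + ((1 - r) G)(x - 1) / 2 + ((1 - r) G)(x + 1) / 2\<close>, the equation for the expected
  occupation times of the walk stopped at rate \<open>r\<close>. As \<open>(1 - r) G = h\<close> vanishes at infinity, \<open>G\<close> is
  the minimal solution, i.e. the actual occupation times. Hence \<open>P(S\<^sub>\<tau> = x) = r(x) G(x) = \<mu>(x)\<close>,
  and \<open>\<tau> < \<infinity>\<close> a.s. because these masses add up to \<open>1\<close>. For uniform integrability, a discrete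
  Dynkin formula gives \<open>E \<bar>S\<^sub>t\<^sub>\<and>\<^sub>\<tau> - y\<bar> \<le> \<bar>y\<bar> + h(y)\<close>, so the mass of \<open>\<bar>S\<^sub>t\<^sub>\<and>\<^sub>\<tau>\<bar> > 2n\<close> is at most
  \<open>h(n) + h(-n)\<close>, uniformly in \<open>t\<close>.\<close>

lemma discrete_convex_mono_from:
  fixes k :: "int \<Rightarrow> real"
  assumes convex: "\<And>x. 2 * k x \<le> k (x - 1) + k (x + 1)" and up: "k x \<le> k (x + 1)"
  shows "k x \<le> k (x + int n)"
proof -
  have "k x \<le> k (x + int n) \<and> k (x + int n) \<le> k (x + int n + 1)"
  proof (induction n)
    case 0 then show ?case using up by simp
  next
    case (Suc n)
    have "2 * k (x + int n + 1) \<le> k (x + int n) + k (x + int n + 2)"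
      using convex[of "x + int n + 1"] by (simp add: algebra_simps)
    with Suc show ?case by (simp add: algebra_simps)
  qed
  then show ?thesis ..
qed

lemma nonneg_convex_vanishing_eq_0:
  fixes k :: "int \<Rightarrow> real"
  assumes nonneg: "\<And>x. 0 \<le> k x" and convex: "\<And>x. 2 * k x \<le> k (x - 1) + k (x + 1)"
    and right: "(\<lambda>n. k (int n)) \<longlonglongrightarrow> 0" and left: "(\<lambda>n. k (- int n)) \<longlonglongrightarrow> 0"
  shows "k x = 0"
proof (rule ccontr)
  assume "k x \<noteq> 0"
  with nonneg have pos: "0 < k x" by (simp add: order_le_neq_trans)
  have small: "\<exists>n \<ge> nat \<bar>x\<bar>. f n < k x" if "f \<longlonglongrightarrow> 0" for f :: "nat \<Rightarrow> real"
  proof -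
    have "\<forall>\<^sub>F n in sequentially. f n < k x \<and> nat \<bar>x\<bar> \<le> n"
      using order_tendstoD(2)[OF that pos] eventually_ge_at_top by (rule eventually_conj)
    then show ?thesis by (auto simp: eventually_sequentially)
  qed
  show False
  proof (cases "k x \<le> k (x + 1)")
    case True
    obtain n where n: "nat \<bar>x\<bar> \<le> n" "k (int n) < k x" using small[OF right] by blast
    have "k x \<le> k (x + int (nat (int n - x)))"
      using discrete_convex_mono_from[OF convex True] .
    moreover have "x + int (nat (int n - x)) = int n" using n(1) by linarith
    ultimately show False using n(2) by simp
  next
    case False
    define k' where "k' y = k (- y)" for y
    have convex': "2 * k' y \<le> k' (y - 1) + k' (y + 1)" for y
    proof -
      have "- (y - 1) = - y + 1" "- (y + 1) = - y - 1" by simp_all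
      then show ?thesis using convex[of "- y"] unfolding k'_def by (simp only:)
    qed
    have "k' (- x) \<le> k' (- x + 1)"
      using convex[of x] False by (simp add: k'_def algebra_simps)
    note mono = discrete_convex_mono_from[OF convex' this]
    obtain n where n: "nat \<bar>x\<bar> \<le> n" "k (- int n) < k x" using small[OF left] by blast
    have "k' (- x) \<le> k' (- x + int (nat (int n + x)))" by (rule mono)
    moreover have "- x + int (nat (int n + x)) = int n" using n(1) by linarith
    ultimately show False using n(2) by (simp add: k'_def)
  qed
qed

subsection \<open>Occupation masses of a walk stopped at rate \<open>r\<close>\<close>

text \<open>\<open>alive_mass r t x\<close> is the probability that the walk sits at \<open>x\<close> at time \<open>t\<close>
  and has not been stopped at any time \<open>u < t\<close>.\<close>
primrec alive_mass :: "(int \<Rightarrow> real) \<Rightarrow> nat \<Rightarrow> int \<Rightarrow> real" where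
  "alive_mass r 0 x = (if x = 0 then 1 else 0)"
| "alive_mass r (Suc t) x =
     ((1 - r (x - 1)) * alive_mass r t (x - 1) + (1 - r (x + 1)) * alive_mass r t (x + 1)) / 2"

lemma alive_mass_nonneg: "(\<And>x. r x \<le> 1) \<Longrightarrow> 0 \<le> alive_mass r t x"
  by (induction t arbitrary: x) (auto intro!: add_nonneg_nonneg mult_nonneg_nonneg)

lemma alive_mass_eq_0_outside: "int t < \<bar>x\<bar> \<Longrightarrow> alive_mass r t x = 0"
  by (induction t arbitrary: x) auto

lemma alive_mass_partial_sums_le:
  assumes r: "\<And>x. 0 \<le> r x \<and> r x \<le> 1" and G_nonneg: "\<And>x. 0 \<le> G x"
    and G_super: "\<And>x. (if x = 0 then 1 else 0)
                     + ((1 - r (x - 1)) * G (x - 1) + (1 - r (x + 1)) * G (x + 1)) / 2 \<le> G x"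
  shows "(\<Sum>t<T. alive_mass r t x) \<le> G x"
proof (induction T arbitrary: x)
  case 0 then show ?case using G_nonneg by simp
next
  case (Suc T)
  have "(\<Sum>t<Suc T. alive_mass r t x) = alive_mass r 0 x + (\<Sum>t<T. alive_mass r (Suc t) x)"
    by (rule sum.lessThan_Suc_shift)
  also have "(\<Sum>t<T. alive_mass r (Suc t) x) = ((1 - r (x - 1)) * (\<Sum>t<T. alive_mass r t (x - 1))
       + (1 - r (x + 1)) * (\<Sum>t<T. alive_mass r t (x + 1))) / 2"
    by (simp add: sum_divide_distrib[symmetric] sum_distrib_left sum.distrib)
  also have "\<dots> \<le> ((1 - r (x - 1)) * G (x - 1) + (1 - r (x + 1)) * G (x + 1)) / 2"
    using Suc.IH[of "x - 1"] Suc.IH[of "x + 1"] r[of "x - 1"] r[of "x + 1"]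
    by (intro divide_right_mono add_mono mult_left_mono) auto
  finally show ?case using G_super[of x] by simp
qed

lemma suminf_alive_mass_eq:
  assumes "\<And>x. summable (\<lambda>t. alive_mass r t x)"
  shows "(\<Sum>t. alive_mass r t x) = (if x = 0 then 1 else 0)
    + ((1 - r (x - 1)) * (\<Sum>t. alive_mass r t (x - 1)) + (1 - r (x + 1)) * (\<Sum>t. alive_mass r t (x + 1))) / 2"
proof -
  have "(\<lambda>t. alive_mass r (Suc t) x) sums (((1 - r (x - 1)) * (\<Sum>t. alive_mass r t (x - 1))
      + (1 - r (x + 1)) * (\<Sum>t. alive_mass r t (x + 1))) / 2)"
    (is "_ sums ?S")
    unfolding alive_mass.simps using assms by (intro sums_divide sums_add sums_mult summable_sums)
  then have "(\<lambda>t. alive_mass r t x) sums (?S + alive_mass r 0 x)"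
    by (subst sums_Suc_iff[symmetric]) (simp del: alive_mass.simps)
  then show ?thesis by (simp add: sums_iff add.commute)
qed

text \<open>The series of alive masses is the minimal nonnegative solution of the equation for \<open>G\<close>.
  It is the only one for which \<open>(1 - r) G\<close> vanishes at \<open>\<plusminus>\<infinity>\<close>: for two such solutions,
  \<open>(1 - r)\<close> times their difference is a nonnegative convex function vanishing at \<open>\<plusminus>\<infinity>\<close>.\<close>
lemma alive_mass_sums:
  assumes r: "\<And>x. 0 \<le> r x \<and> r x \<le> 1" and G_nonneg: "\<And>x. 0 \<le> G x"
    and G_eq: "\<And>x. G x = (if x = 0 then 1 else 0)
                     + ((1 - r (x - 1)) * G (x - 1) + (1 - r (x + 1)) * G (x + 1)) / 2"
    and right: "(\<lambda>n. (1 - r (int n)) * G (int n)) \<longlonglongrightarrow> 0"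
    and left: "(\<lambda>n. (1 - r (- int n)) * G (- int n)) \<longlonglongrightarrow> 0"
  shows "(\<lambda>t. alive_mass r t x) sums G x"
proof -
  have mass_nonneg: "0 \<le> alive_mass r t x" for t x using alive_mass_nonneg r by blast
  have partial: "(\<Sum>t<T. alive_mass r t x) \<le> G x" for T x
    by (rule alive_mass_partial_sums_le[OF r G_nonneg]) (simp only: G_eq[symmetric] order_refl)
  define g where "g x = (\<Sum>t. alive_mass r t x)" for x
  have g_sums: "(\<lambda>t. alive_mass r t x) sums g x" for x
    unfolding g_def using partial mass_nonneg
    by (intro summable_sums summableI_nonneg_bounded) auto
  have g_le: "g x \<le> G x" for x
    unfolding g_def using partial g_sums by (intro suminf_le_const) (auto simp: sums_iff)
  have g_eq: "g x = (if x = 0 then 1 else 0)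
                   + ((1 - r (x - 1)) * g (x - 1) + (1 - r (x + 1)) * g (x + 1)) / 2" for x
    using g_sums unfolding g_def by (intro suminf_alive_mass_eq) (simp add: sums_iff)
  define k where "k x = (1 - r x) * (G x - g x)" for x
  have k_nonneg: "0 \<le> k x" for x using g_le[of x] r[of x] by (simp add: k_def)
  have k_le: "k x \<le> G x - g x" for x
    using g_le[of x] r[of x] unfolding k_def by (simp add: mult_left_le_one_le)
  have k_avg: "G x - g x = (k (x - 1) + k (x + 1)) / 2" for x
    using G_eq[of x] g_eq[of x] unfolding k_def by (simp add: algebra_simps add_divide_distrib diff_divide_distrib)
  have k_le_G: "k x \<le> (1 - r x) * G x" for x
  proof -
    have "0 \<le> g x"
      unfolding g_def using g_sums[of x] mass_nonneg by (intro suminf_nonneg) (auto simp: sums_iff)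
    then show ?thesis using r[of x] unfolding k_def by (simp add: algebra_simps mult_left_le)
  qed
  have vanish: "(\<lambda>n. k (f n)) \<longlonglongrightarrow> 0" if "(\<lambda>n. (1 - r (f n)) * G (f n)) \<longlonglongrightarrow> 0" for f
    using k_nonneg k_le_G by (intro tendsto_sandwich[OF _ _ tendsto_const that]) auto
  have "k x = 0" for x
  proof (rule nonneg_convex_vanishing_eq_0)
    show "2 * k x \<le> k (x - 1) + k (x + 1)" for x using k_le[of x] k_avg[of x] by simp
  qed (use k_nonneg vanish[OF right] vanish[OF left] in auto)
  then have "G x = g x" using k_avg[of x] by simp
  then show ?thesis using g_sums by simp
qed

subsection \<open>The potential of a centred law\<close>

definition potential :: "int pmf \<Rightarrow> int \<Rightarrow> real" where
  "potential \<mu> x = measure_pmf.expectation \<mu> (\<lambda>y. \<bar>real_of_int y - real_of_int x\<bar>)"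

text \<open>\<open>\<bar>x\<bar>\<close> is the potential of the point mass at \<open>0\<close>, the law of \<open>S\<^sub>0\<close>.\<close>
definition potential_gap :: "int pmf \<Rightarrow> int \<Rightarrow> real" where
  "potential_gap \<mu> x = potential \<mu> x - \<bar>real_of_int x\<bar>"

text \<open>The expected number of visits of the stopped walk to \<open>x\<close>, as the proof will show.\<close>
definition occupation :: "int pmf \<Rightarrow> int \<Rightarrow> real" where
  "occupation \<mu> x = potential_gap \<mu> x + pmf \<mu> x"

text \<open>Where \<open>occupation \<mu> x = 0\<close> the walk never visits \<open>x\<close>, so the value \<open>1\<close> there is arbitrary.\<close>
definition stopping_rate :: "int pmf \<Rightarrow> int \<Rightarrow> real" where
  "stopping_rate \<mu> x = (if occupation \<mu> x = 0 then 1 else pmf \<mu> x / occupation \<mu> x)"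

context
  fixes \<mu> :: "int pmf"
  assumes mean_zero: "mean_zero_int \<mu>"
begin

lemma mean_zero_integrable: "integrable (measure_pmf \<mu>) real_of_int"
  using mean_zero unfolding mean_zero_int_def by simp

lemma mean_zero_expectation: "measure_pmf.expectation \<mu> real_of_int = 0"
  using mean_zero unfolding mean_zero_int_def by simp

lemma mean_zero_integrable_abs_diff: "integrable (measure_pmf \<mu>) (\<lambda>y. \<bar>real_of_int y - c\<bar>)"
  using mean_zero_integrable by (intro integrable_abs Bochner_Integration.integrable_diff) auto

lemma potential_gap_nonneg: "0 \<le> potential_gap \<mu> x"
proof -
  have "\<bar>measure_pmf.expectation \<mu> (\<lambda>y. real_of_int y - real_of_int x)\<bar> \<le> potential \<mu> x"
    unfolding potential_def by (rule integral_abs_bound)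
  moreover have "measure_pmf.expectation \<mu> (\<lambda>y. real_of_int y - real_of_int x) = - real_of_int x"
    using mean_zero_integrable mean_zero_expectation by (subst Bochner_Integration.integral_diff) auto
  ultimately show ?thesis unfolding potential_gap_def by simp
qed

lemma potential_second_difference:
  "potential \<mu> (x - 1) + potential \<mu> (x + 1) = 2 * potential \<mu> x + 2 * pmf \<mu> x"
proof -
  have pointwise: "\<bar>real_of_int y - real_of_int (x - 1)\<bar> + \<bar>real_of_int y - real_of_int (x + 1)\<bar>
      = 2 * \<bar>real_of_int y - real_of_int x\<bar> + 2 * indicator {x} y" for y
    by (cases "y < x"; cases "y = x") (auto simp: indicator_def)
  have "potential \<mu> (x - 1) + potential \<mu> (x + 1) = measure_pmf.expectation \<mu>
      (\<lambda>y. \<bar>real_of_int y - real_of_int (x - 1)\<bar> + \<bar>real_of_int y - real_of_int (x + 1)\<bar>)"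
    unfolding potential_def using mean_zero_integrable_abs_diff by (subst Bochner_Integration.integral_add) auto
  also have "\<dots> = measure_pmf.expectation \<mu>
      (\<lambda>y. 2 * \<bar>real_of_int y - real_of_int x\<bar> + 2 * indicator {x} y)"
    by (simp only: pointwise)
  also have "\<dots> = 2 * potential \<mu> x + 2 * pmf \<mu> x"
    unfolding potential_def using mean_zero_integrable_abs_diff
    by (subst Bochner_Integration.integral_add)
       (auto simp: measure_pmf_single measure_pmf.emeasure_eq_measure intro!: integrable_real_indicator)
  finally show ?thesis .
qed

lemma occupation_eq:
  "occupation \<mu> x = (if x = 0 then 1 else 0) + (potential_gap \<mu> (x - 1) + potential_gap \<mu> (x + 1)) / 2"
proof -
  have "\<bar>real_of_int (x - 1)\<bar> + \<bar>real_of_int (x + 1)\<bar> = 2 * \<bar>real_of_int x\<bar> + 2 * (if x = 0 then 1 else 0)"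
    by auto
  then show ?thesis using potential_second_difference[of x]
    unfolding occupation_def potential_gap_def by (simp add: field_simps)
qed

lemma occupation_nonneg: "0 \<le> occupation \<mu> x"
  using potential_gap_nonneg[of x] by (simp add: occupation_def)

lemma stopping_rate_bounds: "0 \<le> stopping_rate \<mu> x \<and> stopping_rate \<mu> x \<le> 1"
proof (cases "occupation \<mu> x = 0")
  case False
  then have "0 < occupation \<mu> x" using occupation_nonneg[of x] by linarith
  then show ?thesis
    using potential_gap_nonneg[of x] by (simp add: stopping_rate_def occupation_def divide_le_eq_1)
qed (simp add: stopping_rate_def)

lemma stopping_rate_mult_occupation: "stopping_rate \<mu> x * occupation \<mu> x = pmf \<mu> x"
proof (cases "occupation \<mu> x = 0")
  case True
  then have "pmf \<mu> x = 0"
    using potential_gap_nonneg[of x] pmf_nonneg[of \<mu> x] unfolding occupation_def by linarith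
  with True show ?thesis by simp
qed (simp add: stopping_rate_def)

lemma potential_gap_eq_continuation: "potential_gap \<mu> x = (1 - stopping_rate \<mu> x) * occupation \<mu> x"
  using stopping_rate_mult_occupation[of x] by (simp add: algebra_simps occupation_def)

text \<open>For \<open>n \<ge> \<bar>y\<bar>\<close> one has \<open>\<bar>y - c n\<bar> = n - c y\<close>, so by \<open>E y = 0\<close> dominated convergence applies
  with the bound \<open>2 \<bar>y\<bar>\<close>.\<close>
lemma potential_gap_tendsto_0:
  assumes c: "\<bar>c\<bar> = 1"
  shows "(\<lambda>n. potential_gap \<mu> (c * int n)) \<longlonglongrightarrow> 0"
proof -
  define f where "f n y = \<bar>real_of_int y - real_of_int c * real n\<bar> - real n + real_of_int c * real_of_int y"
    for n :: nat and y :: int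
  have c_cases: "c = 1 \<or> c = -1" using c by auto
  have gap_eq: "potential_gap \<mu> (c * int n) = measure_pmf.expectation \<mu> (f n)" for n
  proof -
    have "measure_pmf.expectation \<mu> (f n) = potential \<mu> (c * int n) - real n
        + real_of_int c * measure_pmf.expectation \<mu> real_of_int"
      unfolding f_def potential_def using mean_zero_integrable_abs_diff mean_zero_integrable
      by (simp add: Bochner_Integration.integral_add Bochner_Integration.integral_diff)
    moreover have "\<bar>real_of_int c\<bar> = 1" using c by (metis of_int_1 of_int_abs)
    ultimately show ?thesis using mean_zero_expectation by (simp add: potential_gap_def abs_mult)
  qed
  have "(\<lambda>n. measure_pmf.expectation \<mu> (f n)) \<longlonglongrightarrow> measure_pmf.expectation \<mu> (\<lambda>y. 0)"
  proof (rule integral_dominated_convergence[where w="\<lambda>y. 2 * \<bar>real_of_int y\<bar>"])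
    show "integrable (measure_pmf \<mu>) (\<lambda>y. 2 * \<bar>real_of_int y\<bar>)" using mean_zero_integrable by auto
    show "AE y in measure_pmf \<mu>. (\<lambda>n. f n y) \<longlonglongrightarrow> 0"
    proof (rule AE_I2)
      fix y :: int
      have "\<forall>\<^sub>F n in sequentially. f n y = 0"
        using eventually_ge_at_top[of "nat \<bar>y\<bar>"]
        by (rule eventually_mono) (use c_cases in \<open>auto simp: f_def\<close>)
      then show "(\<lambda>n. f n y) \<longlonglongrightarrow> 0" by (rule tendsto_eventually)
    qed
    show "AE y in measure_pmf \<mu>. norm (f n y) \<le> 2 * \<bar>real_of_int y\<bar>" for n
      using c_cases by (intro AE_I2) (auto simp: f_def)
  qed auto
  then show ?thesis by (simp add: gap_eq)
qed

lemma alive_mass_sums_occupation: "(\<lambda>t. alive_mass (stopping_rate \<mu>) t x) sums occupation \<mu> x"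
proof (rule alive_mass_sums)
  show "0 \<le> occupation \<mu> x" for x by (rule occupation_nonneg)
  show "occupation \<mu> x = (if x = 0 then 1 else 0) + ((1 - stopping_rate \<mu> (x - 1)) * occupation \<mu> (x - 1)
      + (1 - stopping_rate \<mu> (x + 1)) * occupation \<mu> (x + 1)) / 2" for x
    using occupation_eq[of x] by (simp add: potential_gap_eq_continuation)
  show "(\<lambda>n. (1 - stopping_rate \<mu> (int n)) * occupation \<mu> (int n)) \<longlonglongrightarrow> 0"
    using potential_gap_tendsto_0[of 1] by (simp add: potential_gap_eq_continuation)
  show "(\<lambda>n. (1 - stopping_rate \<mu> (- int n)) * occupation \<mu> (- int n)) \<longlonglongrightarrow> 0"
    using potential_gap_tendsto_0[of "-1"] by (simp add: potential_gap_eq_continuation)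
qed (rule stopping_rate_bounds)

lemma stopping_mass_sums_pmf:
  "(\<lambda>t. alive_mass (stopping_rate \<mu>) t x * stopping_rate \<mu> x) sums pmf \<mu> x"
  using sums_mult2[OF alive_mass_sums_occupation, of x "stopping_rate \<mu> x"]
  by (simp add: mult.commute[of "occupation \<mu> x"] stopping_rate_mult_occupation)

end

abbreviation step_law :: "int measure" where
  "step_law \<equiv> measure_pmf (pmf_of_set {-1, 1})"

abbreviation increment_space :: "(nat \<Rightarrow> int) measure" where
  "increment_space \<equiv> PiM UNIV (\<lambda>_. step_law)"

abbreviation coin_space :: "(int \<Rightarrow> real) \<Rightarrow> (nat \<times> int \<Rightarrow> bool) measure" where
  "coin_space r \<equiv> PiM UNIV (\<lambda>(t, x). measure_pmf (bernoulli_pmf (1 - r x)))"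

lemma space_increment_space: "space increment_space = UNIV"
  by (auto simp: space_PiM PiE_def extensional_def)

lemma space_coin_space: "space (coin_space r) = UNIV"
  by (auto simp: space_PiM PiE_def extensional_def split_beta)

lemma space_srw_xi_space: "space (srw_xi_space r) = UNIV"
  by (simp add: srw_xi_space_def space_pair_measure space_increment_space space_coin_space)

lemma prob_space_srw_xi_space: "prob_space (srw_xi_space r)"
  unfolding srw_xi_space_def
  by (intro prob_space_pair prob_space_PiM) (auto simp: split_beta prob_space_measure_pmf)

interpretation increments: product_prob_space "\<lambda>_::nat. step_law" UNIV
  by unfold_locales

lemma measurable_count_space_comp:
  "f \<in> measurable N (count_space UNIV) \<Longrightarrow> g \<in> UNIV \<rightarrow> space M \<Longrightarrow> (\<lambda>x. g (f x)) \<in> measurable N M"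
  by (rule measurable_compose[where N="count_space UNIV"]) auto

lemma measurable_Pair_count_space:
  fixes f :: "'a \<Rightarrow> 'b::countable" and g :: "'a \<Rightarrow> 'c::countable"
  assumes "f \<in> measurable N (count_space UNIV)" "g \<in> measurable N (count_space UNIV)"
  shows "(\<lambda>x. (f x, g x)) \<in> measurable N (count_space UNIV)"
  using measurable_Pair[OF assms] by (simp add: pair_measure_countable)

lemma measurable_map_upt_count_space:
  fixes f :: "nat \<Rightarrow> 'a \<Rightarrow> 'b::countable"
  assumes "\<And>i. i < t \<Longrightarrow> f i \<in> measurable N (count_space UNIV)"
  shows "(\<lambda>x. map (\<lambda>i. f i x) [0..<t]) \<in> measurable N (count_space UNIV)"
  using assms
proof (induction t)
  case (Suc t)
  have "(\<lambda>x. (map (\<lambda>i. f i x) [0..<t], f t x)) \<in> measurable N (count_space UNIV)"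
    using Suc by (intro measurable_Pair_count_space) auto
  from measurable_count_space_comp[OF this, of "\<lambda>(l, a). l @ [a]"] show ?case by simp
qed simp

lemma sets_Collect_count_space_valued:
  "V \<in> measurable N (count_space UNIV) \<Longrightarrow> {\<omega> \<in> space N. P (V \<omega>)} \<in> sets N"
  using measurable_sets[of V N "count_space UNIV" "{v. P v}"] by (simp add: vimage_def Int_def conj_commute)

lemma measurable_increment: "(\<lambda>\<omega>. fst \<omega> u) \<in> measurable (srw_xi_space r) (count_space UNIV)"
  unfolding srw_xi_space_def by measurable

lemma measurable_coin: "(\<lambda>\<omega>. snd \<omega> j) \<in> measurable (srw_xi_space r) (count_space UNIV)"
proof -
  have "(\<lambda>\<omega>. snd \<omega> j) \<in> measurable (srw_xi_space r) (measure_pmf (bernoulli_pmf (1 - r (snd j))))"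
    unfolding srw_xi_space_def
    using measurable_compose[OF measurable_snd measurable_component_singleton[of j UNIV
        "\<lambda>(t, x). measure_pmf (bernoulli_pmf (1 - r x))"]]
    by (simp add: split_beta)
  then show ?thesis by simp
qed

lemma measurable_walk: "(\<lambda>\<omega>. walk \<omega> t) \<in> measurable (srw_xi_space r) (count_space UNIV)"
proof (induction t)
  case (Suc t)
  have "(\<lambda>\<omega>. (walk \<omega> t, fst \<omega> t)) \<in> measurable (srw_xi_space r) (count_space UNIV)"
    by (intro measurable_Pair_count_space Suc measurable_increment)
  from measurable_count_space_comp[OF this, of "\<lambda>(a, b). a + b"] show ?case
    by (simp add: walk_def)
qed (simp add: walk_def)

lemma measurable_coin_on_walk:
  "(\<lambda>\<omega>. snd \<omega> (u, walk \<omega> u)) \<in> measurable (srw_xi_space r) (count_space UNIV)"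
  by (rule measurable_compose_countable[where f="\<lambda>y \<omega>. snd \<omega> (u, y)", OF measurable_coin measurable_walk])

lemma measurable_map_upt_increments:
  assumes "{..<t} \<subseteq> J"
  shows "(\<lambda>v. map v [0..<t]) \<in> measurable (PiM J (\<lambda>_. step_law)) (count_space UNIV)"
proof -
  have "(\<lambda>v. v i) \<in> measurable (PiM J (\<lambda>_. step_law)) (count_space UNIV)" if "i < t" for i
    using measurable_component_singleton[of i J "\<lambda>_. step_law"] that assms by auto
  from measurable_map_upt_count_space[of t "\<lambda>i v. v i", OF this] show ?thesis by simp
qed

lemma measurable_prefix_increments:
  "{..<t} \<subseteq> J \<Longrightarrow> (\<lambda>v. G (map v [0..<t])) \<in> borel_measurable (PiM J (\<lambda>_. step_law))"
  using measurable_count_space_comp[OF measurable_map_upt_increments, of t J G borel] by simp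

lemma nn_integral_prefix_increments:
  assumes "finite J" and "{..<t} \<subseteq> J"
  shows "(\<integral>\<^sup>+\<omega>. G (map \<omega> [0..<t]) \<partial>increment_space) = (\<integral>\<^sup>+v. G (map v [0..<t]) \<partial>PiM J (\<lambda>_. step_law))"
proof -
  have "(\<integral>\<^sup>+v. G (map v [0..<t]) \<partial>PiM J (\<lambda>_. step_law))
      = (\<integral>\<^sup>+v. G (map v [0..<t]) \<partial>distr increment_space (PiM J (\<lambda>_. step_law)) (\<lambda>\<omega>. restrict \<omega> J))"
    using increments.distr_PiM_restrict_finite[OF assms(1)] by simp
  also have "\<dots> = (\<integral>\<^sup>+\<omega>. G (map (restrict \<omega> J) [0..<t]) \<partial>increment_space)"
    using measurable_prefix_increments[OF assms(2), of G]
    by (intro nn_integral_distr) (auto intro: measurable_restrict_subset)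
  also have "\<dots> = (\<integral>\<^sup>+\<omega>. G (map \<omega> [0..<t]) \<partial>increment_space)"
    using assms(2) by (intro nn_integral_cong arg_cong[where f=G] map_cong) auto
  finally show ?thesis by simp
qed

lemma nn_integral_last_increment:
  fixes F :: "int list \<Rightarrow> int \<Rightarrow> ennreal"
  shows "(\<integral>\<^sup>+\<omega>. F (map \<omega> [0..<t]) (\<omega> t) \<partial>increment_space) =
    (\<integral>\<^sup>+\<omega>. ennreal (1/2) * F (map \<omega> [0..<t]) (-1) + ennreal (1/2) * F (map \<omega> [0..<t]) 1 \<partial>increment_space)"
proof -
  define G where "G l = F (take t l) (l ! t)" for l
  define H where "H l = ennreal (1/2) * F l (-1) + ennreal (1/2) * F l 1" for l
  have G_measurable: "(\<lambda>v. G (map v [0..<Suc t])) \<in> borel_measurable (PiM (insert t {..<t}) (\<lambda>_. step_law))"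
    by (rule measurable_prefix_increments) auto
  have "(\<integral>\<^sup>+\<omega>. F (map \<omega> [0..<t]) (\<omega> t) \<partial>increment_space)
      = (\<integral>\<^sup>+\<omega>. G (map \<omega> [0..<Suc t]) \<partial>increment_space)"
    by (simp add: G_def nth_append)
  also have "\<dots> = (\<integral>\<^sup>+v. G (map v [0..<Suc t]) \<partial>PiM (insert t {..<t}) (\<lambda>_. step_law))"
    by (rule nn_integral_prefix_increments) auto
  also have "\<dots> = (\<integral>\<^sup>+v. (\<integral>\<^sup>+d. G (map (v(t := d)) [0..<Suc t]) \<partial>step_law) \<partial>PiM {..<t} (\<lambda>_. step_law))"
    by (rule increments.product_nn_integral_insert[OF _ _ G_measurable]) auto
  also have "\<dots> = (\<integral>\<^sup>+v. H (map v [0..<t]) \<partial>PiM {..<t} (\<lambda>_. step_law))"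
  proof (intro nn_integral_cong)
    fix v :: "nat \<Rightarrow> int"
    have "map (v(t := d)) [0..<Suc t] = map v [0..<t] @ [d]" for d
      by (auto intro: map_cong)
    then have "(\<integral>\<^sup>+d. G (map (v(t := d)) [0..<Suc t]) \<partial>step_law)
        = (F (map v [0..<t]) (-1) + F (map v [0..<t]) 1) / 2"
      by (simp add: G_def nth_append nn_integral_pmf_of_set)
    also have "\<dots> = H (map v [0..<t])"
      by (simp add: H_def divide_ennreal_def ennreal_half distrib_left mult.commute)
    finally show "(\<integral>\<^sup>+d. G (map (v(t := d)) [0..<Suc t]) \<partial>step_law) = H (map v [0..<t])" .
  qed
  also have "\<dots> = (\<integral>\<^sup>+\<omega>. H (map \<omega> [0..<t]) \<partial>increment_space)"
    by (rule nn_integral_prefix_increments[symmetric]) auto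
  finally show ?thesis by (simp add: H_def)
qed

subsection \<open>Paths, coins and the stopping time\<close>

definition survival_weight :: "(int \<Rightarrow> real) \<Rightarrow> int list \<Rightarrow> real" where
  "survival_weight r l = (\<Prod>u<length l. 1 - r (sum_list (take u l)))"

definition path_weight :: "(int \<Rightarrow> real) \<Rightarrow> int \<Rightarrow> int list \<Rightarrow> ennreal" where
  "path_weight r x l = ennreal (if sum_list l = x then survival_weight r l else 0)"

lemma survival_weight_nonneg: "(\<And>x. r x \<le> 1) \<Longrightarrow> 0 \<le> survival_weight r l"
  unfolding survival_weight_def by (intro prod_nonneg) auto

lemma survival_weight_snoc: "survival_weight r (l @ [d]) = survival_weight r l * (1 - r (sum_list l))"
proof -
  have "(\<Prod>u<length l. 1 - r (sum_list (take u (l @ [d])))) = survival_weight r l"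
    unfolding survival_weight_def by (intro prod.cong) auto
  then show ?thesis by (simp add: survival_weight_def prod.lessThan_Suc)
qed

lemma path_weight_snoc:
  assumes r: "\<And>x. 0 \<le> r x \<and> r x \<le> 1"
  shows "path_weight r y (l @ [d]) = ennreal (1 - r (y - d)) * path_weight r (y - d) l"
proof -
  have "(if sum_list (l @ [d]) = y then survival_weight r (l @ [d]) else 0)
      = (1 - r (y - d)) * (if sum_list l = y - d then survival_weight r l else 0)"
    by (auto simp: survival_weight_snoc)
  then show ?thesis
    using r[of "y - d"] survival_weight_nonneg[of r l] r by (simp add: path_weight_def ennreal_mult)
qed

lemma nn_integral_path_weight_Suc:
  assumes r: "\<And>x. 0 \<le> r x \<and> r x \<le> 1"
  shows "(\<integral>\<^sup>+\<omega>. path_weight r y (map \<omega> [0..<Suc t]) \<partial>increment_space)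
    = ennreal (1/2) * ennreal (1 - r (y + 1)) * (\<integral>\<^sup>+\<omega>. path_weight r (y + 1) (map \<omega> [0..<t]) \<partial>increment_space)
    + ennreal (1/2) * ennreal (1 - r (y - 1)) * (\<integral>\<^sup>+\<omega>. path_weight r (y - 1) (map \<omega> [0..<t]) \<partial>increment_space)"
    (is "_ = ennreal (1/2) * ?a * _ + ennreal (1/2) * ?b * _")
proof -
  have "(\<integral>\<^sup>+\<omega>. path_weight r y (map \<omega> [0..<Suc t]) \<partial>increment_space)
      = (\<integral>\<^sup>+\<omega>. ennreal (1/2) * path_weight r y (map \<omega> [0..<t] @ [-1])
                + ennreal (1/2) * path_weight r y (map \<omega> [0..<t] @ [1]) \<partial>increment_space)"
    using nn_integral_last_increment[of "\<lambda>l d. path_weight r y (l @ [d])" t] by simp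
  also have "\<dots> = (\<integral>\<^sup>+\<omega>. ennreal (1/2) * ?a * path_weight r (y + 1) (map \<omega> [0..<t])
                + ennreal (1/2) * ?b * path_weight r (y - 1) (map \<omega> [0..<t]) \<partial>increment_space)"
    using path_weight_snoc[OF r, where y=y and d="-1"] path_weight_snoc[OF r, where y=y and d=1]
    by (simp add: mult.assoc)
  also have "\<dots> = ennreal (1/2) * ?a * (\<integral>\<^sup>+\<omega>. path_weight r (y + 1) (map \<omega> [0..<t]) \<partial>increment_space)
      + ennreal (1/2) * ?b * (\<integral>\<^sup>+\<omega>. path_weight r (y - 1) (map \<omega> [0..<t]) \<partial>increment_space)"
    using measurable_prefix_increments[OF subset_UNIV, of "\<lambda>l. ennreal (1/2) * ?a * path_weight r (y + 1) l"]
      measurable_prefix_increments[OF subset_UNIV, of "\<lambda>l. ennreal (1/2) * ?b * path_weight r (y - 1) l"]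
      measurable_prefix_increments[OF subset_UNIV, of "path_weight r (y + 1)"]
      measurable_prefix_increments[OF subset_UNIV, of "path_weight r (y - 1)"]
    by (simp del: ennreal_half add: nn_integral_add nn_integral_cmult)
  finally show ?thesis .
qed

lemma nn_integral_path_weight:
  assumes r: "\<And>x. 0 \<le> r x \<and> r x \<le> 1"
  shows "(\<integral>\<^sup>+\<omega>. path_weight r x (map \<omega> [0..<t]) \<partial>increment_space) = ennreal (alive_mass r t x)"
proof (induction t arbitrary: x)
  case 0
  then show ?case
    using increments.emeasure_space_1
    by (simp add: path_weight_def survival_weight_def space_increment_space)
next
  case (Suc t y)
  let ?a = "1 - r (y + 1)" and ?b = "1 - r (y - 1)"
  have weights: "0 \<le> ?a" "0 \<le> ?b" "0 \<le> alive_mass r t (y + 1)" "0 \<le> alive_mass r t (y - 1)"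
    using r[of "y + 1"] r[of "y - 1"] alive_mass_nonneg r by auto
  have combine: "ennreal (1/2) * ennreal a * ennreal m = ennreal (1/2 * a * m)"
    if "0 \<le> a" "0 \<le> m" for a m :: real
  proof -
    have "ennreal (1/2 * a * m) = ennreal (1/2 * a) * ennreal m" using that by (intro ennreal_mult) auto
    moreover have "ennreal (1/2 * a) = ennreal (1/2) * ennreal a" using that by (intro ennreal_mult) auto
    ultimately show ?thesis by (simp only:)
  qed
  have "(\<integral>\<^sup>+\<omega>. path_weight r y (map \<omega> [0..<Suc t]) \<partial>increment_space)
      = ennreal (1/2 * ?a * alive_mass r t (y + 1)) + ennreal (1/2 * ?b * alive_mass r t (y - 1))"
    using weights by (simp only: nn_integral_path_weight_Suc[OF r] Suc.IH combine)
  also have "\<dots> = ennreal (1/2 * ?a * alive_mass r t (y + 1) + 1/2 * ?b * alive_mass r t (y - 1))"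
    using weights by (intro ennreal_plus[symmetric]) auto
  also have "\<dots> = ennreal (alive_mass r (Suc t) y)"
    by (rule arg_cong[where f=ennreal]) (simp add: field_simps)
  finally show ?case .
qed

lemma tau_r_eq_infinity_iff: "tau_r \<omega> = \<infinity> \<longleftrightarrow> (\<forall>u. snd \<omega> (u, walk \<omega> u))"
  by (auto simp: tau_r_def)

lemma tau_r_eq_enat_iff:
  "tau_r \<omega> = enat t \<longleftrightarrow> (\<forall>u<t. snd \<omega> (u, walk \<omega> u)) \<and> \<not> snd \<omega> (t, walk \<omega> t)"
proof
  assume tau: "tau_r \<omega> = enat t"
  then have ex: "\<exists>t. \<not> snd \<omega> (t, walk \<omega> t)" by (auto simp: tau_r_def split: if_splits)
  with tau have least: "(LEAST t. \<not> snd \<omega> (t, walk \<omega> t)) = t" by (simp add: tau_r_def)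
  have "\<not> snd \<omega> (t, walk \<omega> t)" using LeastI_ex[OF ex] least by simp
  moreover have "\<forall>u<t. snd \<omega> (u, walk \<omega> u)"
    using not_less_Least[where P="\<lambda>t. \<not> snd \<omega> (t, walk \<omega> t)"] least by blast
  ultimately show "(\<forall>u<t. snd \<omega> (u, walk \<omega> u)) \<and> \<not> snd \<omega> (t, walk \<omega> t)" by blast
next
  assume first: "(\<forall>u<t. snd \<omega> (u, walk \<omega> u)) \<and> \<not> snd \<omega> (t, walk \<omega> t)"
  then have "(LEAST t. \<not> snd \<omega> (t, walk \<omega> t)) = t"
    by (intro Least_equality) (auto simp: not_le[symmetric])
  then show "tau_r \<omega> = enat t" using first by (auto simp: tau_r_def)
qed

lemma enat_less_tau_r_iff: "enat t < tau_r \<omega> \<longleftrightarrow> (\<forall>u\<le>t. snd \<omega> (u, walk \<omega> u))"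
proof (cases "tau_r \<omega>")
  case (enat T)
  then have first: "(\<forall>u<T. snd \<omega> (u, walk \<omega> u)) \<and> \<not> snd \<omega> (T, walk \<omega> T)"
    using tau_r_eq_enat_iff by blast
  show ?thesis
  proof
    assume "enat t < tau_r \<omega>"
    then show "\<forall>u\<le>t. snd \<omega> (u, walk \<omega> u)" using enat first by auto
  next
    assume "\<forall>u\<le>t. snd \<omega> (u, walk \<omega> u)"
    then have "t < T" using first by (metis not_less)
    then show "enat t < tau_r \<omega>" using enat by simp
  qed
next
  case infinity
  then show ?thesis using tau_r_eq_infinity_iff[of \<omega>] by simp
qed

text \<open>\<open>decision_event t x c\<close>: the walk has survived all times \<open>u < t\<close>, is at \<open>x\<close> at time \<open>t\<close>,
  and the coin \<open>\<xi>(t,x)\<close> reads \<open>c\<close>; so \<open>c = False\<close> means \<open>\<tau> = t\<close> and \<open>c = True\<close> means \<open>\<tau> > t\<close>.\<close>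
definition decision_event :: "nat \<Rightarrow> int \<Rightarrow> bool \<Rightarrow> ((nat \<Rightarrow> int) \<times> (nat \<times> int \<Rightarrow> bool)) set" where
  "decision_event t x c = {\<omega>. (\<forall>u<t. snd \<omega> (u, walk \<omega> u)) \<and> walk \<omega> t = x \<and> snd \<omega> (t, x) = c}"

lemma decision_event_stop_iff: "\<omega> \<in> decision_event t x False \<longleftrightarrow> tau_r \<omega> = enat t \<and> walk \<omega> t = x"
  by (auto simp: decision_event_def tau_r_eq_enat_iff)

lemma decision_event_continue_iff: "\<omega> \<in> decision_event t x True \<longleftrightarrow> enat t < tau_r \<omega> \<and> walk \<omega> t = x"
  by (auto simp: decision_event_def enat_less_tau_r_iff le_less)

lemma sets_decision_event: "decision_event t x c \<in> sets (srw_xi_space r)"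
proof -
  let ?V = "\<lambda>\<omega>. (map (\<lambda>u. snd \<omega> (u, walk \<omega> u)) [0..<t], walk \<omega> t, snd \<omega> (t, x))"
  have V: "?V \<in> measurable (srw_xi_space r) (count_space UNIV)"
    by (intro measurable_Pair_count_space measurable_map_upt_count_space measurable_coin_on_walk
        measurable_walk measurable_coin)
  have eq: "decision_event t x c
      = {\<omega> \<in> space (srw_xi_space r). (\<lambda>(l, w, b). (\<forall>v\<in>set l. v) \<and> w = x \<and> b = c) (?V \<omega>)}"
    by (simp add: decision_event_def space_srw_xi_space atLeast0LessThan Ball_def[of "{..<t}"])
  show ?thesis unfolding eq by (rule sets_Collect_count_space_valued[OF V])
qed

text \<open>Given the increments, the coins met along the path are independent: the section of a
  decision event is a cylinder in the coin space.\<close>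
lemma emeasure_decision_event_section:
  assumes r: "\<And>x. 0 \<le> r x \<and> r x \<le> 1"
  shows "emeasure (coin_space r) (Pair \<omega> -` decision_event t x c)
    = path_weight r x (map \<omega> [0..<t]) * ennreal (if c then 1 - r x else r x)"
proof -
  interpret coins: product_prob_space "\<lambda>(t::nat, x::int). measure_pmf (bernoulli_pmf (1 - r x))" UNIV
    by (auto intro!: product_prob_space.intro product_sigma_finite.intro prob_space_imp_sigma_finite
        product_prob_space_axioms.intro simp: split_beta prob_space_measure_pmf)
  define w where "w = (if c then 1 - r x else r x)"
  have w: "0 \<le> w" using r[of x] by (simp add: w_def)
  show ?thesis
  proof (cases "(\<Sum>i<t. \<omega> i) = x")
    case False
    then have "Pair \<omega> -` decision_event t x c = {}" by (auto simp: decision_event_def walk_def)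
    then show ?thesis
      using False by (simp add: path_weight_def interv_sum_list_conv_sum_set_nat atLeast0LessThan)
  next
    case True
    let ?w = "\<lambda>u. \<Sum>i<u. \<omega> i"
    let ?X = "\<lambda>j::nat \<times> int. if fst j < t then {True} else {c}"
    have "Pair \<omega> -` decision_event t x c
        = {\<xi> \<in> space (coin_space r). \<forall>j \<in> (\<lambda>u. (u, ?w u)) ` {..t}. \<xi> j \<in> ?X j}"
      using True by (auto simp: decision_event_def walk_def space_coin_space)
    then have "emeasure (coin_space r) (Pair \<omega> -` decision_event t x c)
        = (\<Prod>j \<in> (\<lambda>u. (u, ?w u)) ` {..t}. emeasure (measure_pmf (bernoulli_pmf (1 - r (snd j)))) (?X j))"
      using coins.emeasure_PiM_Collect[of "(\<lambda>u. (u, ?w u)) ` {..t}" ?X] by (simp add: split_beta)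
    also have "\<dots> = (\<Prod>u\<le>t. ennreal (if u < t then 1 - r (?w u) else w))"
      using True r by (subst prod.reindex) (auto simp: inj_on_def emeasure_pmf_single w_def intro!: prod.cong)
    also have "\<dots> = ennreal ((\<Prod>u<t. 1 - r (?w u)) * w)"
    proof -
      have "0 \<le> (\<Prod>u<t. 1 - r (?w u))" using r by (intro prod_nonneg) auto
      then show ?thesis
        using r w by (simp add: prod_ennreal ennreal_mult lessThan_Suc_atMost[symmetric] prod.lessThan_Suc)
    qed
    also have "(\<Prod>u<t. 1 - r (?w u)) = survival_weight r (map \<omega> [0..<t])"
      unfolding survival_weight_def
      by (intro prod.cong) (auto simp: take_map interv_sum_list_conv_sum_set_nat atLeast0LessThan)
    finally show ?thesis
      using True r w survival_weight_nonneg
      by (simp add: path_weight_def w_def interv_sum_list_conv_sum_set_nat atLeast0LessThan ennreal_mult')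
  qed
qed

lemma emeasure_decision_event:
  assumes r: "\<And>x. 0 \<le> r x \<and> r x \<le> 1"
  shows "emeasure (srw_xi_space r) (decision_event t x c)
    = ennreal (alive_mass r t x * (if c then 1 - r x else r x))"
proof -
  interpret coins: prob_space "coin_space r"
    by (rule prob_space_PiM) (simp add: split_beta prob_space_measure_pmf)
  have "emeasure (srw_xi_space r) (decision_event t x c)
      = (\<integral>\<^sup>+\<omega>. emeasure (coin_space r) (Pair \<omega> -` decision_event t x c) \<partial>increment_space)"
    using sets_decision_event[of t x c r] unfolding srw_xi_space_def
    by (rule coins.emeasure_pair_measure_alt)
  also have "\<dots> = (\<integral>\<^sup>+\<omega>. path_weight r x (map \<omega> [0..<t]) \<partial>increment_space) * ennreal (if c then 1 - r x else r x)"
    by (simp add: emeasure_decision_event_section[OF r] nn_integral_multc measurable_prefix_increments)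
  also have "\<dots> = ennreal (alive_mass r t x * (if c then 1 - r x else r x))"
    using alive_mass_nonneg r r[of x] by (simp add: nn_integral_path_weight[OF r] ennreal_mult)
  finally show ?thesis .
qed

subsection \<open>The law of the stopped walk\<close>

definition continuing_mass :: "(int \<Rightarrow> real) \<Rightarrow> nat \<Rightarrow> int \<Rightarrow> real" where
  "continuing_mass r t x = (1 - r x) * alive_mass r t x"

text \<open>The law of \<open>S\<^sub>t\<^sub>\<and>\<^sub>\<tau>\<close>: stopped at \<open>x\<close> at some time \<open>u \<le> t\<close>, or still running at \<open>x\<close> after time \<open>t\<close>.\<close>
definition stopped_law :: "(int \<Rightarrow> real) \<Rightarrow> nat \<Rightarrow> int \<Rightarrow> real" where
  "stopped_law r t x = (\<Sum>u\<le>t. alive_mass r u x * r x) + continuing_mass r t x"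

definition discrete_laplacian :: "(int \<Rightarrow> real) \<Rightarrow> int \<Rightarrow> real" where
  "discrete_laplacian \<phi> x = (\<phi> (x - 1) + \<phi> (x + 1)) / 2 - \<phi> x"

lemma continuing_mass_nonneg:
  assumes "\<And>x. 0 \<le> r x \<and> r x \<le> 1"
  shows "0 \<le> continuing_mass r t x"
  using assms alive_mass_nonneg[of r t x] by (simp add: continuing_mass_def)

lemma stopped_law_nonneg:
  assumes "\<And>x. 0 \<le> r x \<and> r x \<le> 1"
  shows "0 \<le> stopped_law r t x"
  unfolding stopped_law_def using assms
  by (intro add_nonneg_nonneg sum_nonneg mult_nonneg_nonneg continuing_mass_nonneg alive_mass_nonneg) auto

lemma continuing_mass_eq_0_outside: "int t < \<bar>x\<bar> \<Longrightarrow> continuing_mass r t x = 0"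
  by (simp add: continuing_mass_def alive_mass_eq_0_outside)

lemma stopped_law_eq_0_outside: "int t < \<bar>x\<bar> \<Longrightarrow> stopped_law r t x = 0"
  unfolding stopped_law_def by (simp add: continuing_mass_eq_0_outside alive_mass_eq_0_outside)

lemma sum_shift_compact_support:
  fixes f :: "int \<Rightarrow> real"
  assumes supp: "\<And>x. int m < \<bar>x\<bar> \<Longrightarrow> f x = 0" and "m < N" and k: "\<bar>k\<bar> = 1"
  shows "(\<Sum>x\<in>{-int N..int N}. f (x + k)) = (\<Sum>x\<in>{-int N..int N}. f x)"
proof -
  have "(\<Sum>x\<in>{-int N..int N}. f (x + k)) = (\<Sum>y\<in>{-int N + k..int N + k}. f y)"
    by (rule sum.reindex_bij_witness[of _ "\<lambda>y. y - k" "\<lambda>x. x + k"]) auto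
  also have "\<dots> = (\<Sum>y\<in>{-int N - 1..int N + 1}. f y)"
    using k \<open>m < N\<close> by (intro sum.mono_neutral_left) (auto intro!: supp)
  also have "\<dots> = (\<Sum>y\<in>{-int N..int N}. f y)"
    using \<open>m < N\<close> by (intro sum.mono_neutral_right) (auto intro!: supp)
  finally show ?thesis .
qed

text \<open>Discrete Dynkin formula; the window \<open>[-N, N]\<close> contains the supports of all the masses involved.\<close>
lemma stopped_law_dynkin:
  fixes \<phi> :: "int \<Rightarrow> real"
  assumes "t < N"
  shows "(\<Sum>x\<in>{-int N..int N}. \<phi> x * stopped_law r t x)
    = \<phi> 0 + (\<Sum>s<t. \<Sum>x\<in>{-int N..int N}. continuing_mass r s x * discrete_laplacian \<phi> x)"
  using assms
proof (induction t)
  case 0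
  have "(\<Sum>x\<in>{-int N..int N}. \<phi> x * stopped_law r 0 x) = (\<Sum>x\<in>{-int N..int N}. if x = 0 then \<phi> 0 else 0)"
    by (intro sum.cong) (auto simp: stopped_law_def continuing_mass_def algebra_simps)
  then show ?case by simp
next
  case (Suc t)
  let ?W = "{-int N..int N}"
  have step: "stopped_law r (Suc t) x
      = stopped_law r t x - continuing_mass r t x + (continuing_mass r t (x - 1) + continuing_mass r t (x + 1)) / 2" for x
    by (simp add: stopped_law_def continuing_mass_def field_simps)
  have left: "(\<Sum>x\<in>?W. \<phi> x * continuing_mass r t (x - 1)) = (\<Sum>x\<in>?W. \<phi> (x + 1) * continuing_mass r t x)"
    using sum_shift_compact_support[of "Suc t" "\<lambda>y. \<phi> y * continuing_mass r t (y - 1)" N 1] Suc.prems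
    by (auto simp: continuing_mass_eq_0_outside)
  have right: "(\<Sum>x\<in>?W. \<phi> x * continuing_mass r t (x + 1)) = (\<Sum>x\<in>?W. \<phi> (x - 1) * continuing_mass r t x)"
    using sum_shift_compact_support[of "Suc t" "\<lambda>y. \<phi> y * continuing_mass r t (y + 1)" N "-1"] Suc.prems
    by (auto simp: continuing_mass_eq_0_outside)
  have "(\<Sum>x\<in>?W. \<phi> x * stopped_law r (Suc t) x)
      = (\<Sum>x\<in>?W. \<phi> x * stopped_law r t x) - (\<Sum>x\<in>?W. \<phi> x * continuing_mass r t x)
        + ((\<Sum>x\<in>?W. \<phi> x * continuing_mass r t (x - 1)) + (\<Sum>x\<in>?W. \<phi> x * continuing_mass r t (x + 1))) / 2"
    by (simp add: step algebra_simps sum.distrib sum_subtractf sum_divide_distrib[symmetric] sum_distrib_left)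
  also have "\<dots> = (\<Sum>x\<in>?W. \<phi> x * stopped_law r t x) + (\<Sum>x\<in>?W. continuing_mass r t x * discrete_laplacian \<phi> x)"
    unfolding left right discrete_laplacian_def
    by (simp add: algebra_simps sum.distrib sum_subtractf sum_divide_distrib[symmetric] sum_distrib_left)
  finally show ?case using Suc by simp
qed

lemma discrete_laplacian_abs_diff:
  "discrete_laplacian (\<lambda>x. \<bar>real_of_int x - real_of_int c\<bar>) x = (if x = c then 1 else 0)"
proof -
  consider "x + 1 \<le> c" | "x = c" | "c + 1 \<le> x" by linarith
  then show ?thesis
  proof cases
    case 1
    then have "real_of_int x + 1 \<le> real_of_int c" by linarith
    with 1 show ?thesis unfolding discrete_laplacian_def by (simp add: abs_if)
  next
    case 3
    then have "real_of_int c + 1 \<le> real_of_int x" by linarith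
    with 3 show ?thesis unfolding discrete_laplacian_def by (simp add: abs_if)
  qed (simp add: discrete_laplacian_def)
qed

lemma stopped_law_sum: "t < N \<Longrightarrow> (\<Sum>x\<in>{-int N..int N}. stopped_law r t x) = 1"
  using stopped_law_dynkin[of t N "\<lambda>x. 1" r] by (simp add: discrete_laplacian_def)

context
  fixes \<mu> :: "int pmf"
  assumes mean_zero: "mean_zero_int \<mu>"
begin

lemma sum_continuing_mass_le_potential_gap:
  "(\<Sum>s<t. continuing_mass (stopping_rate \<mu>) s y) \<le> potential_gap \<mu> y"
proof -
  let ?r = "stopping_rate \<mu>"
  have r: "0 \<le> ?r x \<and> ?r x \<le> 1" for x by (rule stopping_rate_bounds[OF mean_zero])
  have "(\<Sum>s<t. continuing_mass ?r s y) = (1 - ?r y) * (\<Sum>s<t. alive_mass ?r s y)"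
    by (simp add: continuing_mass_def sum_distrib_left)
  also have "\<dots> \<le> (1 - ?r y) * occupation \<mu> y"
  proof (rule mult_left_mono)
    show "(\<Sum>s<t. alive_mass ?r s y) \<le> occupation \<mu> y"
      using alive_mass_sums_occupation[OF mean_zero, of y] alive_mass_nonneg[of ?r] r
      by (metis sums_iff sum_le_suminf finite_lessThan)
  qed (use r in auto)
  also have "\<dots> = potential_gap \<mu> y"
    by (simp add: potential_gap_eq_continuation[OF mean_zero])
  finally show ?thesis .
qed

text \<open>The discrete Laplacian of \<open>\<bar>x - y\<bar>\<close> is the indicator of \<open>y\<close>, so the Dynkin formula leaves
  \<open>\<bar>y\<bar>\<close> plus the total continuing mass at \<open>y\<close>.\<close>
lemma stopped_law_abs_moment_le:
  assumes "t < N"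
  shows "(\<Sum>x\<in>{-int N..int N}. \<bar>real_of_int x - real_of_int y\<bar> * stopped_law (stopping_rate \<mu>) t x)
    \<le> \<bar>real_of_int y\<bar> + potential_gap \<mu> y"
proof -
  let ?r = "stopping_rate \<mu>" and ?\<phi> = "\<lambda>x. \<bar>real_of_int x - real_of_int y\<bar>"
  have r: "0 \<le> ?r x \<and> ?r x \<le> 1" for x by (rule stopping_rate_bounds[OF mean_zero])
  have laplacian: "(\<Sum>x\<in>{-int N..int N}. continuing_mass ?r s x * discrete_laplacian ?\<phi> x)
      = (\<Sum>x\<in>{-int N..int N}. if x = y then continuing_mass ?r s y else 0)" for s
    by (intro sum.cong) (auto simp: discrete_laplacian_abs_diff)
  have "(\<Sum>x\<in>{-int N..int N}. ?\<phi> x * stopped_law ?r t x)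
      = \<bar>real_of_int y\<bar> + (\<Sum>s<t. \<Sum>x\<in>{-int N..int N}. continuing_mass ?r s x * discrete_laplacian ?\<phi> x)"
    using stopped_law_dynkin[OF assms, of ?\<phi> ?r] by simp
  also have "\<dots> \<le> \<bar>real_of_int y\<bar> + (\<Sum>s<t. continuing_mass ?r s y)"
    using continuing_mass_nonneg[OF r] by (intro add_left_mono sum_mono) (simp add: laplacian sum.delta)
  finally show ?thesis using sum_continuing_mass_le_potential_gap[where t=t and y=y] by simp
qed

text \<open>The tail is dominated pointwise: \<open>\<bar>x\<bar> 1{\<bar>x\<bar> > 2n} \<le> \<bar>x - n\<bar> + \<bar>x + n\<bar> - 2n\<close>.\<close>
lemma stopped_law_tail_le:
  "(\<Sum>x\<in>{-int (Suc t)..int (Suc t)}. \<bar>real_of_int x\<bar> * (if 2 * real n < \<bar>real_of_int x\<bar> then 1 else 0)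
      * stopped_law (stopping_rate \<mu>) t x)
    \<le> potential_gap \<mu> (int n) + potential_gap \<mu> (- int n)"
proof -
  let ?W = "{-int (Suc t)..int (Suc t)}" and ?\<nu> = "stopped_law (stopping_rate \<mu>) t"
  have r: "\<And>x. 0 \<le> stopping_rate \<mu> x \<and> stopping_rate \<mu> x \<le> 1"
    using stopping_rate_bounds[OF mean_zero] by blast
  have pointwise: "\<bar>real_of_int x\<bar> * (if 2 * real n < \<bar>real_of_int x\<bar> then 1 else 0)
      \<le> \<bar>real_of_int x - real_of_int (int n)\<bar> + \<bar>real_of_int x - real_of_int (- int n)\<bar> - 2 * real n" for x
    by (cases "2 * real n < \<bar>real_of_int x\<bar>") auto
  have "(\<Sum>x\<in>?W. \<bar>real_of_int x\<bar> * (if 2 * real n < \<bar>real_of_int x\<bar> then 1 else 0) * ?\<nu> x)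
      \<le> (\<Sum>x\<in>?W. (\<bar>real_of_int x - real_of_int (int n)\<bar> + \<bar>real_of_int x - real_of_int (- int n)\<bar> - 2 * real n) * ?\<nu> x)"
    using pointwise stopped_law_nonneg[OF r] by (intro sum_mono mult_right_mono) auto
  also have "\<dots> = (\<Sum>x\<in>?W. \<bar>real_of_int x - real_of_int (int n)\<bar> * ?\<nu> x)
      + (\<Sum>x\<in>?W. \<bar>real_of_int x - real_of_int (- int n)\<bar> * ?\<nu> x) - 2 * real n * (\<Sum>x\<in>?W. ?\<nu> x)"
    by (simp add: algebra_simps sum.distrib sum_subtractf sum_distrib_left)
  also have "\<dots> \<le> (real n + potential_gap \<mu> (int n)) + (real n + potential_gap \<mu> (- int n)) - 2 * real n"
    using stopped_law_abs_moment_le[of t "Suc t" "int n"] stopped_law_abs_moment_le[of t "Suc t" "- int n"]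
      stopped_law_sum[of t "Suc t" "stopping_rate \<mu>"]
    by simp
  finally show ?thesis by simp
qed

end

subsection \<open>The Skorokhod embedding\<close>

lemma nn_integral_countable_valued:
  fixes X :: "'a \<Rightarrow> 'b::countable"
  assumes X: "X \<in> measurable M (count_space UNIV)"
  shows "(\<integral>\<^sup>+\<omega>. F (X \<omega>) \<partial>M) = (\<integral>\<^sup>+z. F z * emeasure M {\<omega> \<in> space M. X \<omega> = z} \<partial>count_space UNIV)"
proof -
  have sets: "{\<omega> \<in> space M. X \<omega> = z} \<in> sets M" for z
    using sets_Collect_count_space_valued[OF X] .
  have "(\<integral>\<^sup>+\<omega>. F (X \<omega>) \<partial>M)
      = (\<integral>\<^sup>+\<omega>. (\<integral>\<^sup>+z. F z * indicator {\<omega> \<in> space M. X \<omega> = z} \<omega> \<partial>count_space UNIV) \<partial>M)"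
  proof (intro nn_integral_cong)
    fix \<omega> assume "\<omega> \<in> space M"
    then have "(\<integral>\<^sup>+z. F z * indicator {\<omega> \<in> space M. X \<omega> = z} \<omega> \<partial>count_space UNIV)
        = (\<integral>\<^sup>+z. F z * indicator {X \<omega>} z \<partial>count_space UNIV)"
      by (intro nn_integral_cong) (auto simp: indicator_def)
    then show "F (X \<omega>) = (\<integral>\<^sup>+z. F z * indicator {\<omega> \<in> space M. X \<omega> = z} \<omega> \<partial>count_space UNIV)"
      by (simp add: nn_integral_indicator_singleton)
  qed
  also have "\<dots> = (\<integral>\<^sup>+z. (\<integral>\<^sup>+\<omega>. F z * indicator {\<omega> \<in> space M. X \<omega> = z} \<omega> \<partial>M) \<partial>count_space UNIV)"
    by (rule nn_integral_count_space_nn_integral) (use sets in \<open>simp_all, measurable\<close>)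
  also have "\<dots> = (\<integral>\<^sup>+z. F z * emeasure M {\<omega> \<in> space M. X \<omega> = z} \<partial>count_space UNIV)"
    by (intro nn_integral_cong) (simp add: nn_integral_cmult_indicator sets)
  finally show ?thesis .
qed

lemma stopped_position_event_eq:
  "{\<omega> \<in> space (srw_xi_space r). tau_r \<omega> \<noteq> \<infinity> \<and> walk \<omega> (the_enat (tau_r \<omega>)) = x}
    = (\<Union>t. decision_event t x False)"
  by (auto simp: space_srw_xi_space decision_event_stop_iff)

lemma stopped_walk_event_eq:
  "{\<omega> \<in> space (srw_xi_space r). stopped_walk \<omega> t = z}
    = (\<Union>u\<le>t. decision_event u z False) \<union> decision_event t z True"
proof (intro set_eqI iffI)
  fix \<omega> assume "\<omega> \<in> {\<omega> \<in> space (srw_xi_space r). stopped_walk \<omega> t = z}"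
  then have stopped: "stopped_walk \<omega> t = z" by simp
  show "\<omega> \<in> (\<Union>u\<le>t. decision_event u z False) \<union> decision_event t z True"
  proof (cases "tau_r \<omega> \<le> enat t")
    case True
    then obtain u where u: "tau_r \<omega> = enat u" "u \<le> t" by (cases "tau_r \<omega>") auto
    then show ?thesis using stopped by (auto simp: stopped_walk_def decision_event_stop_iff)
  next
    case False
    then have "min (enat t) (tau_r \<omega>) = enat t" by simp
    then show ?thesis using False stopped by (auto simp: stopped_walk_def decision_event_continue_iff)
  qed
next
  fix \<omega> assume "\<omega> \<in> (\<Union>u\<le>t. decision_event u z False) \<union> decision_event t z True"
  then show "\<omega> \<in> {\<omega> \<in> space (srw_xi_space r). stopped_walk \<omega> t = z}"
    by (auto simp: stopped_walk_def min_def space_srw_xi_space decision_event_stop_iff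
        decision_event_continue_iff less_imp_le)
qed

lemma measurable_stopped_walk: "(\<lambda>\<omega>. stopped_walk \<omega> t) \<in> measurable (srw_xi_space r) (count_space UNIV)"
proof (subst measurable_count_space_eq2_countable, intro conjI ballI)
  fix z :: int
  have "(\<lambda>\<omega>. stopped_walk \<omega> t) -` {z} \<inter> space (srw_xi_space r)
      = (\<Union>u\<le>t. decision_event u z False) \<union> decision_event t z True"
    by (subst stopped_walk_event_eq[symmetric]) auto
  then show "(\<lambda>\<omega>. stopped_walk \<omega> t) -` {z} \<inter> space (srw_xi_space r) \<in> sets (srw_xi_space r)"
    using sets_decision_event by auto
qed auto

context
  fixes \<mu> :: "int pmf"
  assumes mean_zero: "mean_zero_int \<mu>"
begin

lemma emeasure_stops_at: "emeasure (srw_xi_space (stopping_rate \<mu>)) (\<Union>t. decision_event t x False) = pmf \<mu> x"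
proof -
  let ?M = "srw_xi_space (stopping_rate \<mu>)"
  have "emeasure ?M (\<Union>t. decision_event t x False) = (\<Sum>t. emeasure ?M (decision_event t x False))"
    by (rule suminf_emeasure[symmetric])
       (auto simp: sets_decision_event disjoint_family_on_def decision_event_stop_iff)
  also have "\<dots> = (\<Sum>t. ennreal (alive_mass (stopping_rate \<mu>) t x * stopping_rate \<mu> x))"
    by (simp add: emeasure_decision_event stopping_rate_bounds[OF mean_zero])
  also have "\<dots> = pmf \<mu> x"
    using stopping_mass_sums_pmf[OF mean_zero, of x] alive_mass_nonneg[of "stopping_rate \<mu>"]
      stopping_rate_bounds[OF mean_zero]
    by (subst suminf_ennreal2) (auto simp: sums_iff)
  finally show ?thesis .
qed

lemma measure_stopped_position:
  "measure (srw_xi_space (stopping_rate \<mu>))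
     {\<omega> \<in> space (srw_xi_space (stopping_rate \<mu>)). tau_r \<omega> \<noteq> \<infinity> \<and> walk \<omega> (the_enat (tau_r \<omega>)) = x}
   = pmf \<mu> x"
  unfolding stopped_position_event_eq measure_def emeasure_stops_at by simp

text \<open>The laws of the stopped positions add up to the total mass of \<open>\<mu>\<close>, which is \<open>1\<close>.\<close>
lemma AE_tau_r_finite: "AE \<omega> in srw_xi_space (stopping_rate \<mu>). tau_r \<omega> \<noteq> \<infinity>"
proof -
  let ?M = "srw_xi_space (stopping_rate \<mu>)" and ?A = "\<lambda>x. \<Union>t. decision_event t x False"
  interpret prob_space ?M by (rule prob_space_srw_xi_space)
  have sets: "?A x \<in> sets ?M" for x using sets_decision_event by auto
  have finite_eq: "{\<omega> \<in> space ?M. tau_r \<omega> \<noteq> \<infinity>} = (\<Union>x. ?A x)"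
    by (auto simp: space_srw_xi_space decision_event_stop_iff)
  have "emeasure ?M (\<Union>x. ?A x) = (\<integral>\<^sup>+x. emeasure ?M (?A x) \<partial>count_space UNIV)"
    by (rule emeasure_UN_countable) (auto simp: sets disjoint_family_on_def decision_event_stop_iff)
  also have "\<dots> = 1"
    by (simp add: emeasure_stops_at nn_integral_pmf measure_pmf.emeasure_space_1[simplified])
  finally have "prob {\<omega> \<in> space ?M. tau_r \<omega> \<noteq> \<infinity>} = 1"
    using finite_eq by (simp add: emeasure_eq_measure)
  from AE_prob_1[OF this] show ?thesis by (rule AE_mp) (auto intro!: AE_I2)
qed

lemma emeasure_stopped_walk:
  "emeasure (srw_xi_space (stopping_rate \<mu>)) {\<omega> \<in> space (srw_xi_space (stopping_rate \<mu>)). stopped_walk \<omega> t = z}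
    = stopped_law (stopping_rate \<mu>) t z"
proof -
  let ?M = "srw_xi_space (stopping_rate \<mu>)" and ?r = "stopping_rate \<mu>"
  have r: "\<And>x. 0 \<le> ?r x \<and> ?r x \<le> 1" using stopping_rate_bounds[OF mean_zero] by blast
  have "emeasure ?M ((\<Union>u\<le>t. decision_event u z False) \<union> decision_event t z True)
      = emeasure ?M (\<Union>u\<le>t. decision_event u z False) + emeasure ?M (decision_event t z True)"
    by (rule plus_emeasure[symmetric])
       (auto simp: sets_decision_event decision_event_stop_iff decision_event_continue_iff)
  also have "emeasure ?M (\<Union>u\<le>t. decision_event u z False) = (\<Sum>u\<le>t. emeasure ?M (decision_event u z False))"
    by (rule sum_emeasure[symmetric])
       (auto simp: sets_decision_event disjoint_family_on_def decision_event_stop_iff)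
  also have "\<dots> = ennreal (\<Sum>u\<le>t. alive_mass ?r u z * ?r z)"
    using alive_mass_nonneg[of ?r] r by (simp add: emeasure_decision_event[OF r] sum_ennreal)
  also have "emeasure ?M (decision_event t z True) = continuing_mass ?r t z"
    by (simp add: emeasure_decision_event[OF r] continuing_mass_def mult.commute)
  also have "ennreal (\<Sum>u\<le>t. alive_mass ?r u z * ?r z) + ennreal (continuing_mass ?r t z)
      = stopped_law ?r t z"
    unfolding stopped_law_def using alive_mass_nonneg[of ?r] r continuing_mass_nonneg[OF r]
    by (intro ennreal_plus[symmetric] sum_nonneg mult_nonneg_nonneg) auto
  finally show ?thesis by (simp add: stopped_walk_event_eq)
qed

lemma unif_integrable_stopped_walk:
  "unif_integrable (srw_xi_space (stopping_rate \<mu>)) (\<lambda>t \<omega>. real_of_int (stopped_walk \<omega> t))"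
  unfolding unif_integrable_def
proof (intro allI impI)
  fix e :: real assume e: "0 < e"
  let ?M = "srw_xi_space (stopping_rate \<mu>)" and ?gap = "\<lambda>n. potential_gap \<mu> (int n) + potential_gap \<mu> (- int n)"
  have "?gap \<longlonglongrightarrow> 0 + 0"
    using potential_gap_tendsto_0[OF mean_zero, of 1] potential_gap_tendsto_0[OF mean_zero, of "-1"]
    by (intro tendsto_add) auto
  then have "\<forall>\<^sub>F n in sequentially. ?gap n < e" using e by (simp add: order_tendstoD(2))
  then obtain n where n: "?gap n < e" by (auto simp: eventually_sequentially)
  show "\<exists>K. \<forall>t. (\<integral>\<^sup>+\<omega>. ennreal \<bar>real_of_int (stopped_walk \<omega> t)\<bar>
      * indicator {\<omega>. K < \<bar>real_of_int (stopped_walk \<omega> t)\<bar>} \<omega> \<partial>?M) < ennreal e"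
  proof (intro exI allI)
    fix t
    define tail where "tail z = \<bar>real_of_int z\<bar> * (if 2 * real n < \<bar>real_of_int z\<bar> then 1 else 0)" for z :: int
    have tail_nonneg: "0 \<le> tail z" for z by (simp add: tail_def)
    have "(\<integral>\<^sup>+\<omega>. ennreal \<bar>real_of_int (stopped_walk \<omega> t)\<bar>
          * indicator {\<omega>. 2 * real n < \<bar>real_of_int (stopped_walk \<omega> t)\<bar>} \<omega> \<partial>?M)
        = (\<integral>\<^sup>+\<omega>. ennreal (tail (stopped_walk \<omega> t)) \<partial>?M)"
      by (intro nn_integral_cong) (simp add: tail_def indicator_def)
    also have "\<dots> = (\<integral>\<^sup>+z. ennreal (tail z) * stopped_law (stopping_rate \<mu>) t z \<partial>count_space UNIV)"
      using nn_integral_countable_valued[OF measurable_stopped_walk, where F="\<lambda>z. ennreal (tail z)"]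
      by (simp add: emeasure_stopped_walk)
    also have "\<dots> = (\<Sum>z\<in>{-int (Suc t)..int (Suc t)}. ennreal (tail z) * stopped_law (stopping_rate \<mu>) t z)"
      by (rule nn_integral_count_space') (auto simp: stopped_law_eq_0_outside)
    also have "\<dots> = ennreal (\<Sum>z\<in>{-int (Suc t)..int (Suc t)}. tail z * stopped_law (stopping_rate \<mu>) t z)"
      using tail_nonneg stopped_law_nonneg[of "stopping_rate \<mu>" t] stopping_rate_bounds[OF mean_zero]
      by (subst sum_ennreal[symmetric]) (auto simp: ennreal_mult intro!: sum.cong)
    also have "\<dots> \<le> ennreal (?gap n)"
      using stopped_law_tail_le[OF mean_zero, where t=t and n=n] by (intro ennreal_leI) (simp add: tail_def)
    also have "\<dots> < ennreal e"
      using n e potential_gap_nonneg[OF mean_zero] by (subst ennreal_less_iff) auto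
    finally show "(\<integral>\<^sup>+\<omega>. ennreal \<bar>real_of_int (stopped_walk \<omega> t)\<bar>
        * indicator {\<omega>. 2 * real n < \<bar>real_of_int (stopped_walk \<omega> t)\<bar>} \<omega> \<partial>?M) < ennreal e" .
  qed
qed

end

theorem theorem1:
  fixes \<mu> :: "int pmf"
  assumes "mean_zero_int \<mu>"
  shows "\<exists>r :: int \<Rightarrow> real. (\<forall>x. 0 \<le> r x \<and> r x \<le> 1) \<and>
    (AE \<omega> in srw_xi_space r. tau_r \<omega> \<noteq> \<infinity>) \<and>
    (\<forall>x. measure (srw_xi_space r)
            {\<omega> \<in> space (srw_xi_space r). tau_r \<omega> \<noteq> \<infinity> \<and> walk \<omega> (the_enat (tau_r \<omega>)) = x}
          = pmf \<mu> x) \<and>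
    unif_integrable (srw_xi_space r) (\<lambda>t \<omega>. real_of_int (stopped_walk \<omega> t))"
  using stopping_rate_bounds[OF assms] AE_tau_r_finite[OF assms] measure_stopped_position[OF assms]
    unif_integrable_stopped_walk[OF assms]
  by blast

end
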